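(* For every $k\ge1$, every clean universal $k$-URA $\mathcal A$ over $(\mathbb N;=)$ (over any finite alphabet), every configuration $C$ reachable in $\mathcal A$ and every location $\ell$ of $\mathcal A$, the number of states in $C$ with location $\ell$ is at most $(k\cdot4^k\cdot k!)^k$. In other words, $N_k\le(k\cdot 4^k\cdot k!)^k$.
   Context: Let $\Sigma$ be a finite alphabet; data words are finite sequences in $(\Sigma\times\mathbb N)^*$. Let $\mathbb N_\bot=\mathbb N\cup\{\bot\}$, $\bot$ equal only to itself. Register constraints over registers $\mathcal R$ are Boolean combinations of atoms $t_1=t_2$ with $t_i\in\{\#\}\cup\{r,\dot r:r\in\mathcal R\}$, interpreted on triples $(\mathbf u,d,\mathbf v)$ (current valuation, input datum, next valuation, valuations $\mathcal R\to\mathbb N_\bot$). A $k$-RA over $(\mathbb N;=)$ is $(\mathcal R,\mathcal L,\ell_{init},\mathcal L_{acc},E)$ with $|\mathcal R|=k$, finite locations, finite edges $(\ell,\sigma,\phi,\ell')$ whose constraints contain for each register $r$ a conjunct $\dot r=r$ or $\dot r=\#$. States are $\ell(\mathbf u)$; the initial state is $\ell_{init}$ with all registers $\bot$; $\ell(\mathbf u)\xrightarrow{\sigma,d}\ell'(\mathbf u')$ if some edge $(\ell,\sigma,\phi,\ell')$ has $(\mathbf u,d,\mathbf u')\models\phi$. A word is accepted from a state if some run on it from that state ends in a state with location in $\mathcal L_{acc}$; $L(\mathcal A)$: words accepted from the initial state; universal means $L(\mathcal A)=(\Sigma\times\mathbb N)^*$. A $k$-URA is a $k$-RA where each data word has at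 most one initialized accepting run. Clean: every reachable state $\ell(u_1,\dots,u_k)$ accepts some word and no element of $\mathbb N$ occurs in two different components of $(u_1,\dots,u_k)$. A configuration is a set of states; $\mathrm{succ}(C,(\sigma,d))$ is the set of states reachable by one transition on $(\sigma,d)$ from a state in $C$, extended to words; $C$ is reachable if $C=\mathrm{succ}(\{\text{initial state}\},w)$ for some data word $w$. $N_k$ denotes the supremum, over all clean universal $k$-URA $\mathcal A$ over $(\mathbb N;=)$ and all configurations $C$ reachable in $\mathcal A$, of the maximal number of distinct states in $C$ sharing the same location. *)

theory Defs
  imports Main
begin

text \<open>Registers are the elements of a finite type 'r (so k = CARD('r));
 a register valuation maps registers to N_bot, with None playing the role of bot.\<close>

type_synonym 'r valuation = "'r \<Rightarrow> nat option"

datatype 'r rterm = Dat | Cur 'r | Nxt 'r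

datatype 'r constr =
    CTrue
  | Atom "'r rterm" "'r rterm"
  | Neg "'r constr"
  | Conj "'r constr" "'r constr"
  | Disj "'r constr" "'r constr"

fun teval :: "'r rterm \<Rightarrow> 'r valuation \<Rightarrow> nat \<Rightarrow> 'r valuation \<Rightarrow> nat option" where
  "teval Dat u d v = Some d"
| "teval (Cur r) u d v = u r"
| "teval (Nxt r) u d v = v r"

fun sat :: "'r constr \<Rightarrow> 'r valuation \<Rightarrow> nat \<Rightarrow> 'r valuation \<Rightarrow> bool" where
  "sat CTrue u d v = True"
| "sat (Atom t1 t2) u d v = (teval t1 u d v = teval t2 u d v)"
| "sat (Neg \<phi>) u d v = (\<not> sat \<phi> u d v)"
| "sat (Conj \<phi> \<psi>) u d v = (sat \<phi> u d v \<and> sat \<psi> u d v)"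
| "sat (Disj \<phi> \<psi>) u d v = (sat \<phi> u d v \<or> sat \<psi> u d v)"

fun conjuncts :: "'r constr \<Rightarrow> 'r constr set" where
  "conjuncts (Conj \<phi> \<psi>) = conjuncts \<phi> \<union> conjuncts \<psi>"
| "conjuncts \<phi> = {\<phi>}"

record ('r, 'l, 's) ra =
  locs :: "'l set"
  linit :: 'l
  lacc :: "'l set"
  edges :: "('l \<times> 's \<times> 'r constr \<times> 'l) set"

definition is_ra :: "('r::finite, 'l, 's::finite) ra \<Rightarrow> bool" where
  "is_ra A \<longleftrightarrow> finite (locs A) \<and> linit A \<in> locs A \<and> lacc A \<subseteq> locs A
     \<and> finite (edges A)
     \<and> (\<forall>(l, \<sigma>, \<phi>, l') \<in> edges A. l \<in> locs A \<and> l' \<in> locs A \<and>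
          (\<forall>r. Atom (Nxt r) (Cur r) \<in> conjuncts \<phi> \<or> Atom (Cur r) (Nxt r) \<in> conjuncts \<phi>
             \<or> Atom (Nxt r) Dat \<in> conjuncts \<phi> \<or> Atom Dat (Nxt r) \<in> conjuncts \<phi>))"

type_synonym ('l, 'r) state = "'l \<times> 'r valuation"

definition init_state :: "('r, 'l, 's) ra \<Rightarrow> ('l, 'r) state" where
  "init_state A = (linit A, \<lambda>_. None)"

definition step :: "('r, 'l, 's) ra \<Rightarrow> ('l, 'r) state \<Rightarrow> 's \<times> nat \<Rightarrow> ('l, 'r) state \<Rightarrow> bool" where
  "step A q a q' \<longleftrightarrow> (\<exists>\<phi>. (fst q, fst a, \<phi>, fst q') \<in> edges A \<and> sat \<phi> (snd q) (snd a) (snd q'))"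

definition is_run :: "('r, 'l, 's) ra \<Rightarrow> ('l, 'r) state \<Rightarrow> ('s \<times> nat) list \<Rightarrow> ('l, 'r) state list \<Rightarrow> bool" where
  "is_run A q w qs \<longleftrightarrow> length qs = Suc (length w) \<and> qs ! 0 = q
     \<and> (\<forall>i < length w. step A (qs ! i) (w ! i) (qs ! Suc i))"

definition accepting_run :: "('r, 'l, 's) ra \<Rightarrow> ('l, 'r) state \<Rightarrow> ('s \<times> nat) list \<Rightarrow> ('l, 'r) state list \<Rightarrow> bool" where
  "accepting_run A q w qs \<longleftrightarrow> is_run A q w qs \<and> fst (last qs) \<in> lacc A"

definition accepts_from :: "('r, 'l, 's) ra \<Rightarrow> ('l, 'r) state \<Rightarrow> ('s \<times> nat) list \<Rightarrow> bool" where
  "accepts_from A q w \<longleftrightarrow> (\<exists>qs. accepting_run A q w qs)"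

definition universal :: "('r, 'l, 's) ra \<Rightarrow> bool" where
  "universal A \<longleftrightarrow> (\<forall>w. accepts_from A (init_state A) w)"

definition unambiguous :: "('r, 'l, 's) ra \<Rightarrow> bool" where
  "unambiguous A \<longleftrightarrow> (\<forall>w qs qs'. accepting_run A (init_state A) w qs
      \<longrightarrow> accepting_run A (init_state A) w qs' \<longrightarrow> qs = qs')"

definition reachable_state :: "('r, 'l, 's) ra \<Rightarrow> ('l, 'r) state \<Rightarrow> bool" where
  "reachable_state A q \<longleftrightarrow> (\<exists>w qs. is_run A (init_state A) w qs \<and> last qs = q)"

definition clean :: "('r, 'l, 's) ra \<Rightarrow> bool" where
  "clean A \<longleftrightarrow> (\<forall>q. reachable_state A q \<longrightarrow>
      (\<exists>w. accepts_from A q w) \<and>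
      (\<forall>r r'. r \<noteq> r' \<longrightarrow> snd q r \<noteq> None \<longrightarrow> snd q r \<noteq> snd q r'))"

definition succ :: "('r, 'l, 's) ra \<Rightarrow> ('l, 'r) state set \<Rightarrow> 's \<times> nat \<Rightarrow> ('l, 'r) state set" where
  "succ A C a = {q'. \<exists>q\<in>C. step A q a q'}"

definition succ_word :: "('r, 'l, 's) ra \<Rightarrow> ('l, 'r) state set \<Rightarrow> ('s \<times> nat) list \<Rightarrow> ('l, 'r) state set" where
  "succ_word A C w = fold (\<lambda>a C. succ A C a) w C"

definition reachable_config :: "('r, 'l, 's) ra \<Rightarrow> ('l, 'r) state set \<Rightarrow> bool" where
  "reachable_config A C \<longleftrightarrow> (\<exists>w. C = succ_word A {init_state A} w)"

end

theory Submission
  imports Defs "HOL-Library.Cardinality"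
begin

text \<open>Fix a location l and a set D of registers. Two valuations u0, u with (l, u0), (l, u) in C
  and domain D differ by a renaming of data, so a word x0 accepted from (l, u0) is transported to
  a word accepted from (l, u), and by unambiguity from no other state of C. Now fix the values
  g of u on T \<subset> D and put fresh data on D - T: the state p of C accepting the transported word
  must store u r for some r in D - T, for every such u, since otherwise renaming the fresh data
  to those of u shows that p also accepts the word transported to u, forcing p = (l, u). Hence
  each further register is pinned down in at most |D - T| * k ways, so there are at most
  k! * k^k valuations per domain and 2^k * k! * k^k \<le> (k * 4^k * k!)^k states at l.\<close>

lemma sat_conjuncts: "\<psi> \<in> conjuncts \<phi> \<Longrightarrow> sat \<phi> u d v \<Longrightarrow> sat \<psi> u d v"
  by (induction \<phi> rule: conjuncts.induct) auto

lemma step_register_cases: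
  assumes "is_ra A" "step A q a q'"
  shows "snd q' r = snd q r \<or> snd q' r = Some (snd a)"
proof -
  from assms(2) obtain \<phi> where e: "(fst q, fst a, \<phi>, fst q') \<in> edges A"
    and s: "sat \<phi> (snd q) (snd a) (snd q')" unfolding step_def by blast
  from assms(1) e have "Atom (Nxt r) (Cur r) \<in> conjuncts \<phi> \<or> Atom (Cur r) (Nxt r) \<in> conjuncts \<phi>
             \<or> Atom (Nxt r) Dat \<in> conjuncts \<phi> \<or> Atom Dat (Nxt r) \<in> conjuncts \<phi>"
    unfolding is_ra_def by fastforce
  then show ?thesis using sat_conjuncts[OF _ s] by fastforce
qed

lemma ran_step_subset:
  assumes "is_ra A" "step A q a q'"
  shows "ran (snd q') \<subseteq> insert (snd a) (ran (snd q))"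
proof
  fix c assume "c \<in> ran (snd q')"
  then obtain r where "snd q' r = Some c" by (auto simp: ran_def)
  then show "c \<in> insert (snd a) (ran (snd q))"
    using step_register_cases[OF assms, of r] by (auto intro: ranI)
qed

lemma ran_run_subset:
  assumes "is_ra A" "is_run A q x qs" "i < length qs"
  shows "ran (snd (qs ! i)) \<subseteq> ran (snd q) \<union> snd ` set x"
  using assms(3)
proof (induction i)
  case 0
  then show ?case using assms(2) unfolding is_run_def by auto
next
  case (Suc i)
  have i: "i < length x" using Suc.prems assms(2) unfolding is_run_def by auto
  then have "step A (qs ! i) (x ! i) (qs ! Suc i)" using assms(2) unfolding is_run_def by auto
  then have "ran (snd (qs ! Suc i)) \<subseteq> insert (snd (x ! i)) (ran (snd (qs ! i)))"
    by (rule ran_step_subset[OF assms(1)])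
  moreover have "snd (x ! i) \<in> snd ` set x" using i by simp
  ultimately show ?case using Suc by auto
qed

subsection \<open>Renaming data\<close>

definition rename_state :: "(nat \<Rightarrow> nat) \<Rightarrow> ('l, 'r) state \<Rightarrow> ('l, 'r) state" where
  "rename_state f q = (fst q, map_option f \<circ> snd q)"

definition rename_word :: "(nat \<Rightarrow> nat) \<Rightarrow> ('s \<times> nat) list \<Rightarrow> ('s \<times> nat) list" where
  "rename_word f x = map (\<lambda>a. (fst a, f (snd a))) x"

lemma teval_rename:
  "teval t (map_option f \<circ> u) (f d) (map_option f \<circ> v) = map_option f (teval t u d v)"
  by (cases t) auto

lemma set_teval_subset: "set_option (teval t u d v) \<subseteq> ran u \<union> ran v \<union> {d}"
  by (cases t) (auto intro: ranI)

lemma map_option_inj_on_eq: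
  "inj_on f V \<Longrightarrow> set_option a \<subseteq> V \<Longrightarrow> set_option b \<subseteq> V \<Longrightarrow>
   map_option f a = map_option f b \<longleftrightarrow> a = b"
  by (cases a; cases b) (auto simp: inj_on_def)

lemma sat_rename:
  assumes "inj_on f (ran u \<union> ran v \<union> {d})"
  shows "sat \<phi> (map_option f \<circ> u) (f d) (map_option f \<circ> v) = sat \<phi> u d v"
proof (induction \<phi>)
  case (Atom t1 t2)
  show ?case
    by (simp only: sat.simps teval_rename map_option_inj_on_eq[OF assms set_teval_subset set_teval_subset])
qed auto

lemma is_run_rename:
  assumes "is_ra A" "is_run A q x qs" "inj_on f (ran (snd q) \<union> snd ` set x)"
  shows "is_run A (rename_state f q) (rename_word f x) (map (rename_state f) qs)"
  unfolding is_run_def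
proof (intro conjI allI impI)
  have len: "length qs = Suc (length x)" using assms(2) by (simp add: is_run_def)
  then show "length (map (rename_state f) qs) = Suc (length (rename_word f x))"
    by (simp add: rename_word_def)
  show "map (rename_state f) qs ! 0 = rename_state f q" using assms(2) by (simp add: is_run_def)
  fix i assume "i < length (rename_word f x)"
  then have i: "i < length x" by (simp add: rename_word_def)
  then obtain \<phi> where e: "(fst (qs ! i), fst (x ! i), \<phi>, fst (qs ! Suc i)) \<in> edges A"
    and s: "sat \<phi> (snd (qs ! i)) (snd (x ! i)) (snd (qs ! Suc i))"
    using assms(2) unfolding is_run_def step_def by blast
  have "ran (snd (qs ! i)) \<union> ran (snd (qs ! Suc i)) \<union> {snd (x ! i)} \<subseteq> ran (snd q) \<union> snd ` set x"
    using ran_run_subset[OF assms(1,2), of i] ran_run_subset[OF assms(1,2), of "Suc i"] i len by auto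
  with assms(3) have "inj_on f (ran (snd (qs ! i)) \<union> ran (snd (qs ! Suc i)) \<union> {snd (x ! i)})"
    by (rule inj_on_subset)
  from sat_rename[OF this] s
  have "sat \<phi> (map_option f \<circ> snd (qs ! i)) (f (snd (x ! i))) (map_option f \<circ> snd (qs ! Suc i))"
    by simp
  then show "step A (map (rename_state f) qs ! i) (rename_word f x ! i) (map (rename_state f) qs ! Suc i)"
    unfolding step_def using e i len by (auto simp: rename_state_def rename_word_def)
qed

lemma accepts_from_rename:
  assumes "is_ra A" "accepts_from A q x" "inj_on f (ran (snd q) \<union> snd ` set x)"
  shows "accepts_from A (rename_state f q) (rename_word f x)"
proof -
  from assms(2) obtain qs where r: "is_run A q x qs" and a: "fst (last qs) \<in> lacc A"
    unfolding accepts_from_def accepting_run_def by blast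
  have "qs \<noteq> []" using r by (auto simp: is_run_def)
  then have "fst (last (map (rename_state f) qs)) \<in> lacc A"
    using a by (simp add: last_map rename_state_def)
  then show ?thesis using is_run_rename[OF assms(1) r assms(3)]
    unfolding accepts_from_def accepting_run_def by blast
qed

lemma is_run_Nil: "is_run A q [] qs \<longleftrightarrow> qs = [q]"
  by (auto simp: is_run_def length_Suc_conv)

lemma is_run_Cons:
  "is_run A q (a # w) qs \<longleftrightarrow> (\<exists>qs'. qs = q # qs' \<and> step A q a (hd qs') \<and> is_run A (hd qs') w qs')"
proof
  assume r: "is_run A q (a # w) qs"
  then obtain qs' where qs: "qs = q # qs'"
    by (cases qs) (auto simp: is_run_def)
  with r have "qs' \<noteq> []" by (auto simp: is_run_def)
  with r qs show "\<exists>qs'. qs = q # qs' \<and> step A q a (hd qs') \<and> is_run A (hd qs') w qs'"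
    by (auto simp: is_run_def hd_conv_nth)
next
  assume "\<exists>qs'. qs = q # qs' \<and> step A q a (hd qs') \<and> is_run A (hd qs') w qs'"
  then obtain qs' where qs: "qs = q # qs'" and s: "step A q a (hd qs')" and r: "is_run A (hd qs') w qs'"
    by blast
  have "qs' \<noteq> []" using r by (auto simp: is_run_def)
  then show "is_run A q (a # w) qs"
    using qs s r by (auto simp: is_run_def hd_conv_nth less_Suc_eq_0_disj)
qed

lemma is_run_nonempty: "is_run A q w qs \<Longrightarrow> qs \<noteq> []"
  by (auto simp: is_run_def)

lemma hd_run: "is_run A q w qs \<Longrightarrow> hd qs = q"
  by (cases qs) (auto simp: is_run_def)

lemma hd_run_append:
  assumes r1: "is_run A p w qs1" and r2: "is_run A (last qs1) x qs2"
  shows "hd (butlast qs1 @ qs2) = p"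
proof (cases "butlast qs1")
  case Nil
  then have "last qs1 = hd qs1" using is_run_nonempty[OF r1] by (cases qs1) auto
  then show ?thesis using Nil hd_run[OF r1] hd_run[OF r2] by simp
next
  case (Cons b bs)
  then have "hd qs1 = b" by (cases qs1) (auto split: if_splits)
  then show ?thesis using Cons hd_run[OF r1] by simp
qed

lemma is_run_append_iff:
  "is_run A q (w @ x) qs \<longleftrightarrow>
   (\<exists>qs1 qs2. qs = butlast qs1 @ qs2 \<and> is_run A q w qs1 \<and> is_run A (last qs1) x qs2)"
proof (induction w arbitrary: q qs)
  case Nil
  show ?case by (auto simp: is_run_Nil)
next
  case (Cons a w)
  show ?case
  proof
    assume "is_run A q ((a # w) @ x) qs"
    then obtain qs' qs1 qs2 where qs: "qs = q # butlast qs1 @ qs2" and s: "step A q a (hd qs')"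
      and r1: "is_run A (hd qs') w qs1" and r2: "is_run A (last qs1) x qs2"
      and qs': "qs' = butlast qs1 @ qs2"
      by (auto simp: is_run_Cons Cons.IH)
    have "hd qs1 = hd qs'" using hd_run[OF r1] by simp
    moreover have "qs1 \<noteq> []" using r1 by (rule is_run_nonempty)
    ultimately show "\<exists>qs1 qs2. qs = butlast qs1 @ qs2 \<and> is_run A q (a # w) qs1 \<and> is_run A (last qs1) x qs2"
      using qs s r1 r2 by (intro exI[of _ "q # qs1"] exI[of _ qs2]) (auto simp: is_run_Cons)
  next
    assume "\<exists>qs1 qs2. qs = butlast qs1 @ qs2 \<and> is_run A q (a # w) qs1 \<and> is_run A (last qs1) x qs2"
    then obtain qs1 qs2 where qs: "qs = butlast (q # qs1) @ qs2" and s: "step A q a (hd qs1)"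
      and r1: "is_run A (hd qs1) w qs1" and r2: "is_run A (last (q # qs1)) x qs2"
      by (auto simp: is_run_Cons)
    have ne: "qs1 \<noteq> []" using r1 by (rule is_run_nonempty)
    then have r2': "is_run A (last qs1) x qs2" using r2 by simp
    have "hd (butlast qs1 @ qs2) = hd qs1" by (rule hd_run_append[OF r1 r2'])
    then show "is_run A q ((a # w) @ x) qs"
      using qs ne s r1 r2' by (auto simp: is_run_Cons Cons.IH)
  qed
qed

lemma last_run_append: "is_run A p x qs2 \<Longrightarrow> last (butlast qs1 @ qs2) = last qs2"
  by (simp add: is_run_nonempty)

lemma run_single_iff: "(\<exists>qs. is_run A p [a] qs \<and> last qs = q) \<longleftrightarrow> step A p a q"
proof
  assume "step A p a q"
  then have "is_run A p [a] [p, q]" by (simp add: is_run_Cons is_run_Nil)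
  then show "\<exists>qs. is_run A p [a] qs \<and> last qs = q" by force
next
  assume "\<exists>qs. is_run A p [a] qs \<and> last qs = q"
  then obtain qs' where "step A p a (hd qs')" "qs' = [hd qs']" "last (p # qs') = q"
    unfolding is_run_Cons is_run_Nil by blast
  then show "step A p a q" by (metis last_ConsL last_ConsR list.distinct(1))
qed

lemma succ_word_iff_run: "q' \<in> succ_word A {q} w \<longleftrightarrow> (\<exists>qs. is_run A q w qs \<and> last qs = q')"
proof (induction w arbitrary: q' rule: rev_induct)
  case Nil
  show ?case by (auto simp: succ_word_def is_run_Nil)
next
  case (snoc a w)
  have "q' \<in> succ_word A {q} (w @ [a]) \<longleftrightarrow> (\<exists>p \<in> succ_word A {q} w. step A p a q')"
    by (simp add: succ_word_def succ_def)
  also have "\<dots> \<longleftrightarrow> (\<exists>qs1. is_run A q w qs1 \<and> step A (last qs1) a q')"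
    by (metis snoc.IH)
  also have "\<dots> \<longleftrightarrow> (\<exists>qs1 qs2. is_run A q w qs1 \<and> is_run A (last qs1) [a] qs2 \<and> last qs2 = q')"
    by (metis run_single_iff)
  also have "\<dots> \<longleftrightarrow> (\<exists>qs. is_run A q (w @ [a]) qs \<and> last qs = q')"
  proof
    assume "\<exists>qs1 qs2. is_run A q w qs1 \<and> is_run A (last qs1) [a] qs2 \<and> last qs2 = q'"
    then obtain qs1 qs2 where "is_run A q w qs1" "is_run A (last qs1) [a] qs2" "last qs2 = q'"
      by blast
    then show "\<exists>qs. is_run A q (w @ [a]) qs \<and> last qs = q'"
      using is_run_append_iff last_run_append by metis
  next
    assume "\<exists>qs. is_run A q (w @ [a]) qs \<and> last qs = q'"
    then obtain qs1 qs2 where "is_run A q w qs1" "is_run A (last qs1) [a] qs2"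
      "last (butlast qs1 @ qs2) = q'"
      unfolding is_run_append_iff by blast
    then show "\<exists>qs1 qs2. is_run A q w qs1 \<and> is_run A (last qs1) [a] qs2 \<and> last qs2 = q'"
      using last_run_append by metis
  qed
  finally show ?case .
qed

subsection \<open>Counting the valuations at one location\<close>

lemma card_UN_le_card_mult:
  assumes "finite I" "\<And>i. i \<in> I \<Longrightarrow> finite (A i) \<and> card (A i) \<le> b"
  shows "finite (\<Union>i\<in>I. A i) \<and> card (\<Union>i\<in>I. A i) \<le> card I * b"
proof
  show "finite (\<Union>i\<in>I. A i)" using assms by blast
  have "card (\<Union>i\<in>I. A i) \<le> (\<Sum>i\<in>I. card (A i))" by (rule card_UN_le[OF assms(1)])
  also have "\<dots> \<le> card I * b" using assms(2) sum_bounded_above[of I "\<lambda>i. card (A i)" b] by simp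
  finally show "card (\<Union>i\<in>I. A i) \<le> card I * b" .
qed

text \<open>The properties of a reachable configuration C of a clean universal URA used in the count,
  with acc the acceptance relation of the automaton and M a bound on the data stored in C.\<close>

locale config_partition =
  fixes acc :: "('l, 'r::finite) state \<Rightarrow> ('s \<times> nat) list \<Rightarrow> bool"
    and C :: "('l, 'r) state set"
    and M :: nat
  assumes accepts_unique: "q1 \<in> C \<Longrightarrow> q2 \<in> C \<Longrightarrow> acc q1 x \<Longrightarrow> acc q2 x \<Longrightarrow> q1 = q2"
    and accepts_cover: "\<exists>q\<in>C. acc q x"
    and accepts_nonempty: "q \<in> C \<Longrightarrow> \<exists>x. acc q x"
    and config_data_less: "q \<in> C \<Longrightarrow> c \<in> ran (snd q) \<Longrightarrow> c < M"
    and config_inj: "q \<in> C \<Longrightarrow> inj_on (snd q) (dom (snd q))"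
    and accepts_rename: "acc q x \<Longrightarrow> inj_on f (ran (snd q) \<union> snd ` set x) \<Longrightarrow>
        acc (rename_state f q) (rename_word f x)"
begin

definition agreeing_vals :: "'l \<Rightarrow> 'r set \<Rightarrow> 'r set \<Rightarrow> 'r valuation \<Rightarrow> 'r valuation set" where
  "agreeing_vals l D T g = {u. (l, u) \<in> C \<and> dom u = D \<and> (\<forall>r\<in>T. u r = g r)}"

end

locale probe_setting = config_partition acc C M
  for acc :: "('l, 'r::finite) state \<Rightarrow> ('s \<times> nat) list \<Rightarrow> bool" and C M +
  fixes l :: 'l and D :: "'r set" and u0 :: "'r valuation"
    and x0 :: "('s \<times> nat) list" and e :: "'r \<Rightarrow> nat"
  assumes u0_in_C: "(l, u0) \<in> C" and dom_u0: "dom u0 = D" and accepts_x0: "acc (l, u0) x0"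
    and inj_e: "inj e"
begin

text \<open>Data of valuations in C are below M, fresh data are even and at least M, and data of
  x0 not stored in u0 are sent by transfer_map to odd numbers at least M, so no two kinds collide.\<close>

definition transfer_map :: "'r valuation \<Rightarrow> nat \<Rightarrow> nat" where
  "transfer_map u y = (if y \<in> ran u0 then the (u (SOME r. u0 r = Some y)) else 2 * y + 2 * M + 1)"

definition transfer_word :: "'r valuation \<Rightarrow> ('s \<times> nat) list" where
  "transfer_word u = rename_word (transfer_map u) x0"

definition fresh :: "'r \<Rightarrow> nat" where
  "fresh r = 2 * (M + e r)"

definition probe_val :: "'r set \<Rightarrow> 'r valuation \<Rightarrow> 'r valuation" where
  "probe_val T g r = (if r \<in> T then g r else if r \<in> D then Some (fresh r) else None)"

definition probe :: "'r set \<Rightarrow> 'r valuation \<Rightarrow> ('l, 'r) state" where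
  "probe T g = (SOME p. p \<in> C \<and> acc p (transfer_word (probe_val T g)))"

definition fill_map :: "'r set \<Rightarrow> 'r valuation \<Rightarrow> nat \<Rightarrow> nat" where
  "fill_map T u z =
     (if \<exists>r\<in>D - T. z = fresh r then the (u (SOME r. r \<in> D - T \<and> z = fresh r)) else z)"

definition admissible :: "'r valuation \<Rightarrow> bool" where
  "admissible u \<longleftrightarrow> dom u = D \<and> inj_on u D \<and> (\<forall>c\<in>ran u. c < M \<or> even c)"

lemma transfer_map_ran:
  assumes "u0 r = Some y"
  shows "transfer_map u y = the (u r)"
proof -
  have "(SOME r'. u0 r' = Some y) = r"
    using assms config_inj[OF u0_in_C] by (auto simp: inj_on_def dom_def)
  then show ?thesis using assms by (auto simp: transfer_map_def intro: ranI)
qed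

lemma transfer_map_not_ran: "y \<notin> ran u0 \<Longrightarrow> transfer_map u y = 2 * y + 2 * M + 1"
  by (simp add: transfer_map_def)

lemma transfer_map_ran_value:
  assumes "admissible u" "u0 r = Some y"
  shows "u r = Some (transfer_map u y) \<and> (transfer_map u y < M \<or> even (transfer_map u y))"
proof -
  have "r \<in> dom u" using assms dom_u0 by (auto simp: admissible_def)
  then obtain c where "u r = Some c" by auto
  then show ?thesis using assms transfer_map_ran[OF assms(2)] by (auto simp: admissible_def intro: ranI)
qed

lemma transfer_map_in_ran_iff:
  assumes "admissible u"
  shows "y \<in> ran u0 \<longleftrightarrow> transfer_map u y < M \<or> even (transfer_map u y)"
proof
  assume "y \<in> ran u0"
  then show "transfer_map u y < M \<or> even (transfer_map u y)"
    using transfer_map_ran_value[OF assms] by (auto simp: ran_def)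
next
  assume "transfer_map u y < M \<or> even (transfer_map u y)"
  then show "y \<in> ran u0" by (rule contrapos_pp) (simp add: transfer_map_not_ran)
qed

lemma inj_transfer_map:
  assumes "admissible u"
  shows "inj (transfer_map u)"
proof (rule injI)
  fix y1 y2 assume eq: "transfer_map u y1 = transfer_map u y2"
  show "y1 = y2"
  proof (cases "y1 \<in> ran u0")
    case True
    then have "y2 \<in> ran u0" using eq transfer_map_in_ran_iff[OF assms] by metis
    with True obtain r1 r2 where r: "u0 r1 = Some y1" "u0 r2 = Some y2" by (auto simp: ran_def)
    then have "u r1 = u r2" using transfer_map_ran_value[OF assms] eq by metis
    then have "r1 = r2" using assms r dom_u0 by (auto simp: admissible_def inj_on_def)
    then show ?thesis using r by simp
  next
    case False
    then have "y2 \<notin> ran u0" using eq transfer_map_in_ran_iff[OF assms] by metis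
    then show ?thesis using False eq by (simp add: transfer_map_not_ran)
  qed
qed

lemma rename_u0_transfer_map:
  assumes "admissible u"
  shows "map_option (transfer_map u) \<circ> u0 = u"
proof
  fix r
  show "(map_option (transfer_map u) \<circ> u0) r = u r"
  proof (cases "u0 r")
    case None
    then have "u r = None" using assms dom_u0 by (auto simp: admissible_def)
    then show ?thesis using None by simp
  next
    case (Some y)
    then show ?thesis using transfer_map_ran_value[OF assms Some] by simp
  qed
qed

lemma accepts_transfer_word:
  assumes "admissible u"
  shows "acc (l, u) (transfer_word u)"
proof -
  have "inj_on (transfer_map u) (ran (snd (l, u0)) \<union> snd ` set x0)"
    using inj_transfer_map[OF assms] by (rule inj_on_subset) simp
  from accepts_rename[OF accepts_x0 this]
  have "acc (l, map_option (transfer_map u) \<circ> u0) (transfer_word u)"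
    by (simp add: transfer_word_def rename_state_def)
  then show ?thesis using rename_u0_transfer_map[OF assms] by simp
qed

lemma admissible_if_in_C: "(l, u) \<in> C \<Longrightarrow> dom u = D \<Longrightarrow> admissible u"
  using config_inj[of "(l, u)"] config_data_less[of "(l, u)"] by (auto simp: admissible_def)

lemma fill_map_fresh:
  assumes "r \<in> D - T"
  shows "fill_map T u (fresh r) = the (u r)"
proof -
  have "(SOME r'. r' \<in> D - T \<and> fresh r = fresh r') = r"
    using assms inj_e by (auto simp: fresh_def inj_def)
  then show ?thesis using assms by (auto simp: fill_map_def)
qed

lemma fill_map_not_fresh: "\<forall>r\<in>D - T. z \<noteq> fresh r \<Longrightarrow> fill_map T u z = z"
  by (auto simp: fill_map_def)

lemma fill_map_less: "z < M \<Longrightarrow> fill_map T u z = z"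
  by (rule fill_map_not_fresh) (auto simp: fresh_def)

lemma transfer_word_probe_data:
  assumes "u \<in> agreeing_vals l D T g" "z \<in> snd ` set (transfer_word (probe_val T g))"
  shows "(\<exists>r\<in>T. u r = Some z) \<or> (\<exists>r\<in>D - T. z = fresh r) \<or> (M \<le> z \<and> odd z)"
proof -
  obtain y where z: "z = transfer_map (probe_val T g) y"
    using assms(2) by (auto simp: transfer_word_def rename_word_def)
  show ?thesis
  proof (cases "y \<in> ran u0")
    case True
    then obtain r where r: "u0 r = Some y" by (auto simp: ran_def)
    then have rD: "r \<in> D" using dom_u0 by auto
    have z': "z = the (probe_val T g r)" using z transfer_map_ran[OF r] by simp
    show ?thesis
    proof (cases "r \<in> T")
      case True
      then have "u r = g r" "r \<in> dom u" using assms(1) rD by (auto simp: agreeing_vals_def)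
      then have "u r = Some z" using z' True by (cases "g r") (auto simp: probe_val_def)
      then show ?thesis using True by blast
    next
      case False
      then show ?thesis using z' rD by (auto simp: probe_val_def)
    qed
  next
    case False
    then show ?thesis using z by (simp add: transfer_map_not_ran)
  qed
qed

lemma fill_map_transfer_map:
  assumes u: "u \<in> agreeing_vals l D T g"
  shows "fill_map T u (transfer_map (probe_val T g) y) = transfer_map u y"
proof (cases "y \<in> ran u0")
  case True
  then obtain r where r: "u0 r = Some y" by (auto simp: ran_def)
  then have rD: "r \<in> D" using dom_u0 by auto
  then obtain c where c: "u r = Some c" using u by (auto simp: agreeing_vals_def)
  show ?thesis
  proof (cases "r \<in> T")
    case True
    then have "g r = Some c" using c u by (auto simp: agreeing_vals_def)
    moreover have "c < M" using config_data_less[of "(l, u)"] c u by (auto simp: agreeing_vals_def intro: ranI)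
    ultimately show ?thesis using True r c by (simp add: transfer_map_ran probe_val_def fill_map_less)
  next
    case False
    then show ?thesis using rD r by (simp add: transfer_map_ran probe_val_def fill_map_fresh)
  qed
next
  case False
  have "2 * y + 2 * M + 1 \<noteq> fresh r" for r unfolding fresh_def by presburger
  then show ?thesis using False by (simp add: transfer_map_not_ran fill_map_not_fresh)
qed

lemma rename_transfer_word_probe:
  "u \<in> agreeing_vals l D T g \<Longrightarrow>
   rename_word (fill_map T u) (transfer_word (probe_val T g)) = transfer_word u"
  by (simp add: transfer_word_def rename_word_def fill_map_transfer_map)

lemma rename_fill_map_config:
  assumes "q \<in> C"
  shows "rename_state (fill_map T u) q = q"
proof -
  have "map_option (fill_map T u) (snd q r) = snd q r" for r
    using config_data_less[OF assms] fill_map_less by (cases "snd q r") (auto intro: ranI)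
  then show ?thesis by (simp add: rename_state_def comp_def)
qed

lemma inj_on_fill_map:
  assumes u: "u \<in> agreeing_vals l D T g" and p: "p \<in> C"
    and disjoint: "\<forall>r\<in>D - T. u r \<notin> range (snd p)"
  shows "inj_on (fill_map T u) (ran (snd p) \<union> snd ` set (transfer_word (probe_val T g)))"
    (is "inj_on ?f ?Z")
proof -
  have uC: "(l, u) \<in> C" and dom_u: "dom u = D" using u by (auto simp: agreeing_vals_def)
  have inj_u: "r1 = r2" if "r1 \<in> D" "u r1 = u r2" for r1 r2
  proof -
    have "r2 \<in> D" using that dom_u by (metis domIff)
    then show ?thesis using inj_onD[OF config_inj[OF uC]] that dom_u by simp
  qed
  have fresh_image: "u r = Some (?f (fresh r))" if "r \<in> D - T" for r
    using that dom_u fill_map_fresh[OF that] by auto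
  have not_fresh_image: "u r \<noteq> Some z"
    if z: "z \<in> ?Z" "\<forall>r'\<in>D - T. z \<noteq> fresh r'" and r: "r \<in> D - T" for z r
  proof
    assume ur: "u r = Some z"
    from z(1) show False
    proof
      assume "z \<in> ran (snd p)"
      then obtain r' where "snd p r' = Some z" by (auto simp: ran_def)
      then show False using disjoint r ur by (metis rangeI)
    next
      assume "z \<in> snd ` set (transfer_word (probe_val T g))"
      moreover have "z < M" using config_data_less[OF uC] ur by (auto intro: ranI)
      ultimately obtain r' where "r' \<in> T" "u r' = Some z"
        using transfer_word_probe_data[OF u] z(2) by fastforce
      then show False using inj_u[of r r'] r ur by auto
    qed
  qed
  have mixed: False if "z2 \<in> ?Z" "r1 \<in> D - T" "\<forall>r\<in>D - T. z2 \<noteq> fresh r"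
    "?f (fresh r1) = ?f z2" for z2 r1
  proof -
    have "u r1 = Some z2" using fresh_image[OF that(2)] that(4) fill_map_not_fresh[OF that(3)] by simp
    then show False using not_fresh_image[OF that(1,3,2)] by simp
  qed
  show ?thesis
  proof (rule inj_onI)
    fix z1 z2 assume z: "z1 \<in> ?Z" "z2 \<in> ?Z" and eq: "?f z1 = ?f z2"
    consider (both) r1 r2 where "r1 \<in> D - T" "z1 = fresh r1" "r2 \<in> D - T" "z2 = fresh r2"
      | (first) r1 where "r1 \<in> D - T" "z1 = fresh r1" "\<forall>r\<in>D - T. z2 \<noteq> fresh r"
      | (second) r2 where "r2 \<in> D - T" "z2 = fresh r2" "\<forall>r\<in>D - T. z1 \<noteq> fresh r"
      | (neither) "\<forall>r\<in>D - T. z1 \<noteq> fresh r" "\<forall>r\<in>D - T. z2 \<noteq> fresh r"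
      by blast
    then show "z1 = z2"
    proof cases
      case both
      then have "u r1 = u r2" using fresh_image eq by simp
      then show ?thesis using inj_u[of r1 r2] both by auto
    next
      case first
      then show ?thesis using mixed[of z2 r1] z eq by simp
    next
      case second
      then show ?thesis using mixed[of z1 r2] z eq by simp
    next
      case neither
      then show ?thesis using eq fill_map_not_fresh by simp
    qed
  qed
qed

lemma probe_meets_agreeing_vals:
  assumes T: "T \<subset> D" and u: "u \<in> agreeing_vals l D T g"
  shows "\<exists>r\<in>D - T. u r \<in> range (snd (probe T g))"
proof (rule ccontr)
  assume not_meets: "\<not> ?thesis"
  define p where "p = probe T g"
  have disjoint: "\<forall>r\<in>D - T. u r \<notin> range (snd p)" using not_meets p_def by blast
  have "\<exists>p. p \<in> C \<and> acc p (transfer_word (probe_val T g))" using accepts_cover by blast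
  then have p: "p \<in> C" "acc p (transfer_word (probe_val T g))"
    unfolding p_def probe_def by (metis (mono_tags, lifting) someI_ex)+
  have "acc (rename_state (fill_map T u) p) (rename_word (fill_map T u) (transfer_word (probe_val T g)))"
    by (rule accepts_rename[OF p(2) inj_on_fill_map[OF u p(1) disjoint]])
  then have "acc p (transfer_word u)"
    by (simp add: rename_fill_map_config[OF p(1)] rename_transfer_word_probe[OF u])
  moreover have uC: "(l, u) \<in> C" and "dom u = D" using u by (auto simp: agreeing_vals_def)
  then have "acc (l, u) (transfer_word u)" by (intro accepts_transfer_word admissible_if_in_C)
  ultimately have "p = (l, u)" using accepts_unique p(1) uC by blast
  moreover obtain r where "r \<in> D - T" using T by blast
  ultimately show False using disjoint by auto
qed

lemma agreeing_vals_subset_UN: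
  assumes "T \<subset> D"
  shows "agreeing_vals l D T g \<subseteq>
    (\<Union>r\<in>D - T. \<Union>r'. agreeing_vals l D (insert r T) (g(r := snd (probe T g) r')))"
proof
  fix u assume u: "u \<in> agreeing_vals l D T g"
  then obtain r r' where "r \<in> D - T" "u r = snd (probe T g) r'"
    using probe_meets_agreeing_vals[OF assms] by (metis rangeE)
  with u show "u \<in> (\<Union>r\<in>D - T. \<Union>r'. agreeing_vals l D (insert r T) (g(r := snd (probe T g) r')))"
    by (auto simp: agreeing_vals_def)
qed

lemma card_agreeing_vals_le:
  "card (D - T) = n \<Longrightarrow> T \<subseteq> D \<Longrightarrow>
   finite (agreeing_vals l D T g) \<and> card (agreeing_vals l D T g) \<le> fact n * CARD('r) ^ n"
proof (induction n arbitrary: T g)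
  case 0
  then have "T = D" by (simp add: Diff_eq_empty_iff subset_antisym)
  then have sub: "agreeing_vals l D T g \<subseteq> {\<lambda>r. if r \<in> D then g r else None}"
    by (auto simp: agreeing_vals_def fun_eq_iff)
  have "card (agreeing_vals l D T g) \<le> card {\<lambda>r. if r \<in> D then g r else None}"
    by (rule card_mono[OF _ sub]) simp
  then show ?case using finite_subset[OF sub] by simp
next
  case (Suc n)
  let ?S = "\<lambda>r r'. agreeing_vals l D (insert r T) (g(r := snd (probe T g) r'))"
  let ?b = "fact n * CARD('r) ^ n"
  have IH: "finite (?S r r') \<and> card (?S r r') \<le> ?b" if r: "r \<in> D - T" for r r'
  proof -
    have "D - insert r T = (D - T) - {r}" by auto
    then have "card (D - insert r T) = n" using Suc.prems(1) r by (simp add: card_Diff_singleton)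
    moreover have "insert r T \<subseteq> D" using Suc.prems(2) r by auto
    ultimately show ?thesis by (rule Suc.IH)
  qed
  have inner: "finite (\<Union>r'. ?S r r') \<and> card (\<Union>r'. ?S r r') \<le> CARD('r) * ?b" if "r \<in> D - T" for r
    using card_UN_le_card_mult[of UNIV "?S r"] IH[OF that] by simp
  have outer: "finite (\<Union>r\<in>D - T. \<Union>r'. ?S r r') \<and>
      card (\<Union>r\<in>D - T. \<Union>r'. ?S r r') \<le> card (D - T) * (CARD('r) * ?b)"
    by (rule card_UN_le_card_mult[OF _ inner]) simp_all
  have sub: "agreeing_vals l D T g \<subseteq> (\<Union>r\<in>D - T. \<Union>r'. ?S r r')"
    using Suc.prems by (intro agreeing_vals_subset_UN) auto
  have "card (agreeing_vals l D T g) \<le> card (\<Union>r\<in>D - T. \<Union>r'. ?S r r')"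
    using outer sub by (intro card_mono) simp_all
  also have "\<dots> \<le> Suc n * (CARD('r) * ?b)" using outer Suc.prems(1) by simp
  also have "\<dots> = fact (Suc n) * CARD('r) ^ Suc n" by (simp add: algebra_simps)
  finally show ?case using finite_subset[OF sub] outer by simp
qed

end

context config_partition
begin

lemma card_agreeing_vals_empty_le:
  "finite (agreeing_vals l D {} g) \<and> card (agreeing_vals l D {} g) \<le> fact CARD('r) * CARD('r) ^ CARD('r)"
proof (cases "agreeing_vals l D {} g = {}")
  case False
  then obtain u0 where u0: "(l, u0) \<in> C" "dom u0 = D" by (auto simp: agreeing_vals_def)
  obtain x0 where x0: "acc (l, u0) x0" using accepts_nonempty[OF u0(1)] by auto
  obtain e :: "'r \<Rightarrow> nat" where e: "inj e"
    using finite_imp_inj_to_nat_seg[of "UNIV :: 'r set"] by auto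
  interpret probe_setting acc C M l D u0 x0 e
    by unfold_locales (use u0 x0 e in auto)
  have "card D \<le> CARD('r)" by (rule card_mono) auto
  then have "fact (card D) * CARD('r) ^ card D \<le> fact CARD('r) * CARD('r) ^ CARD('r)"
    by (intro mult_le_mono fact_mono power_increasing) (auto simp: finite_UNIV_card_ge_0)
  then show ?thesis using card_agreeing_vals_le[of "{}" "card D" g] by simp
qed simp

lemma card_loc_le:
  "finite {q \<in> C. fst q = l} \<and>
   card {q \<in> C. fst q = l} \<le> 2 ^ CARD('r) * (fact CARD('r) * CARD('r) ^ CARD('r))"
proof -
  let ?U = "\<Union>D. agreeing_vals l D {} (\<lambda>_. None)"
  have sub: "{q \<in> C. fst q = l} \<subseteq> Pair l ` ?U"
  proof
    fix q assume "q \<in> {q \<in> C. fst q = l}"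
    then have "snd q \<in> agreeing_vals l (dom (snd q)) {} (\<lambda>_. None)" "q = Pair l (snd q)"
      by (auto simp: agreeing_vals_def)
    then show "q \<in> Pair l ` ?U" by blast
  qed
  have U: "finite ?U \<and> card ?U \<le> 2 ^ CARD('r) * (fact CARD('r) * CARD('r) ^ CARD('r))"
    using card_UN_le_card_mult[of UNIV "\<lambda>D. agreeing_vals l D {} (\<lambda>_. None)"] card_agreeing_vals_empty_le
    by (simp add: card_UNIV_set)
  have "card {q \<in> C. fst q = l} \<le> card (Pair l ` ?U)" using U sub by (intro card_mono) simp_all
  also have "\<dots> \<le> card ?U" by (rule card_image_le) (use U in simp)
  finally show ?thesis using U finite_subset[OF sub] by simp
qed

end

subsection \<open>Reachable configurations of clean universal URA\<close>

lemma reachable_state_if_reached: "q \<in> succ_word A {init_state A} w \<Longrightarrow> reachable_state A q"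
  unfolding reachable_state_def succ_word_iff_run by blast

lemma ran_reached_subset:
  assumes "is_ra A" "q \<in> succ_word A {init_state A} w"
  shows "ran (snd q) \<subseteq> snd ` set w"
proof -
  obtain qs where r: "is_run A (init_state A) w qs" "last qs = q"
    using assms(2) succ_word_iff_run by metis
  have "length qs = Suc (length w)" using r(1) by (simp add: is_run_def)
  then have "last qs = qs ! length w" by (cases qs rule: rev_cases) (auto simp: nth_append)
  then show ?thesis
    using ran_run_subset[OF assms(1) r(1), of "length w"] r by (simp add: is_run_def init_state_def)
qed

lemma accepting_run_append:
  assumes "is_run A q w qs" "is_run A (last qs) x rs" "fst (last rs) \<in> lacc A"
  shows "accepting_run A q (w @ x) (butlast qs @ rs)"
  using assms is_run_append_iff last_run_append unfolding accepting_run_def by metis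

lemma unambiguous_reached_accepts_eq:
  assumes "unambiguous A" "q1 \<in> succ_word A {init_state A} w" "q2 \<in> succ_word A {init_state A} w"
    "accepts_from A q1 x" "accepts_from A q2 x"
  shows "q1 = q2"
proof -
  obtain qs1 qs2 where qs: "is_run A (init_state A) w qs1" "last qs1 = q1"
    "is_run A (init_state A) w qs2" "last qs2 = q2"
    using assms(2,3) succ_word_iff_run by metis
  obtain rs1 rs2 where rs: "is_run A q1 x rs1" "fst (last rs1) \<in> lacc A"
    "is_run A q2 x rs2" "fst (last rs2) \<in> lacc A"
    using assms(4,5) unfolding accepts_from_def accepting_run_def by blast
  have "butlast qs1 @ rs1 = butlast qs2 @ rs2"
    using assms(1) accepting_run_append[OF qs(1) _ rs(2)] accepting_run_append[OF qs(3) _ rs(4)] qs rs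
    unfolding unambiguous_def by blast
  moreover have "length (butlast qs1) = length (butlast qs2)" using qs by (simp add: is_run_def)
  ultimately have "rs1 = rs2" by simp
  then show ?thesis using hd_run rs by metis
qed

lemma universal_reached_accepts:
  assumes "universal A"
  shows "\<exists>q \<in> succ_word A {init_state A} w. accepts_from A q x"
proof -
  obtain qs where "is_run A (init_state A) (w @ x) qs" "fst (last qs) \<in> lacc A"
    using assms unfolding universal_def accepts_from_def accepting_run_def by blast
  then obtain qs1 qs2 where "is_run A (init_state A) w qs1" "is_run A (last qs1) x qs2"
    "fst (last qs2) \<in> lacc A"
    unfolding is_run_append_iff using last_run_append by metis
  then show ?thesis using succ_word_iff_run unfolding accepts_from_def accepting_run_def by blast
qed

lemma reachable_config_partition:
  assumes "is_ra A" "unambiguous A" "clean A" "universal A"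
  shows "config_partition (accepts_from A) (succ_word A {init_state A} w) (Suc (Max (insert 0 (snd ` set w))))"
proof
  fix q1 q2 x
  assume "q1 \<in> succ_word A {init_state A} w" "q2 \<in> succ_word A {init_state A} w"
    "accepts_from A q1 x" "accepts_from A q2 x"
  then show "q1 = q2" by (rule unambiguous_reached_accepts_eq[OF assms(2)])
next
  show "\<exists>q \<in> succ_word A {init_state A} w. accepts_from A q x" for x
    by (rule universal_reached_accepts[OF assms(4)])
next
  fix q assume "q \<in> succ_word A {init_state A} w"
  then have "reachable_state A q" by (rule reachable_state_if_reached)
  then have "\<exists>x. accepts_from A q x" "\<forall>r r'. r \<noteq> r' \<longrightarrow> snd q r \<noteq> None \<longrightarrow> snd q r \<noteq> snd q r'"
    using assms(3) unfolding clean_def by blast+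
  then show "\<exists>x. accepts_from A q x" "inj_on (snd q) (dom (snd q))"
    by (auto simp: inj_on_def)
next
  fix q c assume "q \<in> succ_word A {init_state A} w" "c \<in> ran (snd q)"
  then have "c \<in> snd ` set w" using ran_reached_subset[OF assms(1)] by blast
  then show "c < Suc (Max (insert 0 (snd ` set w)))" by (simp add: le_imp_less_Suc)
next
  fix q x and f :: "nat \<Rightarrow> nat" assume "accepts_from A q x" "inj_on f (ran (snd q) \<union> snd ` set x)"
  then show "accepts_from A (rename_state f q) (rename_word f x)"
    by (rule accepts_from_rename[OF assms(1)])
qed

lemma pow2_fact_pow_le:
  fixes k :: nat
  assumes "1 \<le> k"
  shows "2 ^ k * (fact k * k ^ k) \<le> (k * 4 ^ k * fact k) ^ k"
proof -
  have "(2::nat) ^ k \<le> 4 ^ k" by (rule power_mono) auto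
  also have "\<dots> \<le> (4 ^ k) ^ k" using power_increasing[OF assms, of "4 ^ k :: nat"] by simp
  finally have two: "(2::nat) ^ k \<le> (4 ^ k) ^ k" .
  have fact: "(fact k :: nat) \<le> fact k ^ k"
    using power_increasing[OF assms, of "fact k :: nat"] by (simp add: fact_ge_1)
  have "2 ^ k * (fact k * k ^ k) = k ^ k * (2 ^ k * fact k)" by (simp add: algebra_simps)
  also have "\<dots> \<le> k ^ k * ((4 ^ k) ^ k * fact k ^ k)" by (intro mult_le_mono2 mult_le_mono two fact)
  also have "\<dots> = (k * 4 ^ k * fact k) ^ k" by (simp add: power_mult_distrib)
  finally show ?thesis .
qed

theorem lemma1:
  fixes A :: "('r::finite, 'l, 's::finite) ra"
    and C :: "('l, 'r) state set"
    and l :: 'l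
  assumes "is_ra A"
    and "unambiguous A"
    and "clean A"
    and "universal A"
    and "reachable_config A C"
    and "l \<in> locs A"
  shows "finite {q \<in> C. fst q = l} \<and>
         card {q \<in> C. fst q = l} \<le> (card (UNIV :: 'r set) * 4 ^ card (UNIV :: 'r set) * fact (card (UNIV :: 'r set)) :: nat) ^ card (UNIV :: 'r set)"
proof -
  obtain w where w: "C = succ_word A {init_state A} w"
    using assms(5) unfolding reachable_config_def by blast
  interpret config_partition "accepts_from A" C "Suc (Max (insert 0 (snd ` set w)))"
    unfolding w by (rule reachable_config_partition[OF assms(1-4)])
  have "2 ^ CARD('r) * (fact CARD('r) * CARD('r) ^ CARD('r)) \<le> (CARD('r) * 4 ^ CARD('r) * fact CARD('r) :: nat) ^ CARD('r)"
    by (rule pow2_fact_pow_le) (simp add: Suc_leI finite_UNIV_card_ge_0)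
  then show ?thesis using card_loc_le[of l] by simp
qed

end
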